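(* Let $A$ be a closed densely defined operator in $\mathcal H$ and $G$ a bounded metric operator such that $H:=G^{1/2}AG^{-1/2}$, with domain $D(H)=G^{1/2}D(A)$, is self-adjoint; let $\{E(\lambda)\}_{\lambda\in\mathbb R}$ be the spectral family of $H$. For $\lambda\in\mathbb R$ let $X(\lambda):\mathcal H\to\mathcal H(G)$ be the continuous linear map characterized by $\langle X(\lambda)\xi,\eta\rangle=\langle E(\lambda)G^{1/2}\xi,G^{-1/2}\eta\rangle$ for all $\xi\in\mathcal H$, $\eta\in D(G^{-1/2})$. Then: (i) $\lim_{\lambda\to-\infty}\langle X(\lambda)\xi,\eta\rangle=0$ and $\lim_{\lambda\to+\infty}\langle X(\lambda)\xi,\eta\rangle=\langle\xi,\eta\rangle$ for all $\xi\in\mathcal H$, $\eta\in D(G^{-1/2})$; (ii) $\lim_{\lambda\downarrow\mu}\langle X(\lambda)\xi,\eta\rangle=\langle X(\mu)\xi,\eta\rangle$ for all $\mu\in\mathbb R$, $\xi\in\mathcal H$, $\eta\in D(G^{-1/2})$; (iii) for all $\xi\in\mathcal H$, $\eta\in D(G^{-1/2})$, the function $\lambda\mapsto\langle X(\lambda)\xi,\eta\rangle$ is of bounded variation with total variation at most $\|G^{1/2}\xi\|\,\|G^{-1/2}\eta\|$; (iv) $\langle A\xi,\eta\rangle=\int_{\mathbb R}\lambda\,d\langle X(\lambda)\xi,\eta\rangle$ for all $\xi\in D(A)$, $\eta\in D(G^{-1/2})$.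
   Context: A metric operator on a Hilbert space $\mathcal H$ is a self-adjoint operator $G$ with $\langle G\xi,\xi\rangle>0$ for all nonzero $\xi\in D(G)$. For bounded $G$, $\mathcal H(G)$ is the completion of $\mathcal H$ in the norm $\|\xi\|_G=\|G^{1/2}\xi\|$, and $\mathcal H(G^{-1})$ is $D(G^{-1/2})$ with the norm $\|\eta\|_{G^{-1}}=\|G^{-1/2}\eta\|$; $\mathcal H(G)$ is identified with the conjugate dual of $\mathcal H(G^{-1})$, and $\langle\Phi,\eta\rangle$ for $\Phi\in\mathcal H(G)$, $\eta\in\mathcal H(G^{-1})$ denotes the corresponding sesquilinear duality pairing extending the inner product of $\mathcal H$. Concretely $X(\lambda)=\widetilde{G^{-1/2}}E(\lambda)G^{1/2}$, where $\widetilde{G^{-1/2}}$ is the continuous extension of $G^{-1/2}$ to a map $\mathcal H\to\mathcal H(G)$. *)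

theory Defs
  imports "HOL-Analysis.Analysis"
begin

section \<open>Complex inner product spaces (complex Hilbert spaces = this class + complete_space)\<close>

text \<open>The inner product is linear in the FIRST argument and conjugate-linear in the
second, as in the paper. The norm is the one induced by the inner product.\<close>

class complex_inner_space = real_normed_vector +
  fixes scaleC :: "complex \<Rightarrow> 'a \<Rightarrow> 'a"
    and cinner :: "'a \<Rightarrow> 'a \<Rightarrow> complex"
  assumes scaleC_add_right: "scaleC c (x + y) = scaleC c x + scaleC c y"
    and scaleC_add_left: "scaleC (c + d) x = scaleC c x + scaleC d x"
    and scaleC_scaleC: "scaleC c (scaleC d x) = scaleC (c * d) x"
    and scaleC_one: "scaleC 1 x = x"
    and scaleR_scaleC: "scaleR r x = scaleC (complex_of_real r) x"
    and cinner_add_left: "cinner (x + y) z = cinner x z + cinner y z"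
    and cinner_scaleC_left: "cinner (scaleC c x) y = c * cinner x y"
    and cinner_commute: "cinner y x = cnj (cinner x y)"
    and cinner_self_nonneg: "0 \<le> Re (cinner x x)"
    and cinner_self_eq_0: "cinner x x = 0 \<longleftrightarrow> x = 0"
    and norm_eq_sqrt_cinner: "norm x = sqrt (Re (cinner x x))"

definition csubspace :: "'a::complex_inner_space set \<Rightarrow> bool" where
  "csubspace D \<longleftrightarrow> 0 \<in> D \<and> (\<forall>x\<in>D. \<forall>y\<in>D. x + y \<in> D) \<and> (\<forall>c. \<forall>x\<in>D. scaleC c x \<in> D)"

text \<open>A (possibly unbounded) linear operator with domain D, acting as the function T on D.\<close>
definition lin_op :: "'a::complex_inner_space set \<Rightarrow> ('a \<Rightarrow> 'a) \<Rightarrow> bool" where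
  "lin_op D T \<longleftrightarrow> csubspace D \<and> (\<forall>x\<in>D. \<forall>y\<in>D. T (x + y) = T x + T y)
      \<and> (\<forall>c. \<forall>x\<in>D. T (scaleC c x) = scaleC c (T x))"

definition densely_defined :: "'a::complex_inner_space set \<Rightarrow> bool" where
  "densely_defined D \<longleftrightarrow> closure D = UNIV"

definition closed_op :: "'a::complex_inner_space set \<Rightarrow> ('a \<Rightarrow> 'a) \<Rightarrow> bool" where
  "closed_op D T \<longleftrightarrow> lin_op D T \<and> closed {(x, T x) | x. x \<in> D}"

text \<open>Self-adjointness of a densely defined operator: D(T*) = D(T) and T* = T on D(T).\<close>
definition selfadjoint_op :: "'a::complex_inner_space set \<Rightarrow> ('a \<Rightarrow> 'a) \<Rightarrow> bool" where
  "selfadjoint_op D T \<longleftrightarrow> lin_op D T \<and> densely_defined D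
     \<and> (\<forall>y. y \<in> D \<longleftrightarrow> (\<exists>z. \<forall>x\<in>D. cinner (T x) y = cinner x z))
     \<and> (\<forall>x\<in>D. \<forall>y\<in>D. cinner (T x) y = cinner x (T y))"

definition bounded_op :: "('a::complex_inner_space \<Rightarrow> 'a) \<Rightarrow> bool" where
  "bounded_op T \<longleftrightarrow> lin_op UNIV T \<and> (\<exists>K. \<forall>x. norm (T x) \<le> K * norm x)"

definition bounded_selfadjoint :: "('a::complex_inner_space \<Rightarrow> 'a) \<Rightarrow> bool" where
  "bounded_selfadjoint T \<longleftrightarrow> bounded_op T \<and> (\<forall>x y. cinner (T x) y = cinner x (T y))"

definition bounded_metric_op :: "('a::complex_inner_space \<Rightarrow> 'a) \<Rightarrow> bool" where
  "bounded_metric_op G \<longleftrightarrow> bounded_selfadjoint G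
     \<and> (\<forall>x. x \<noteq> 0 \<longrightarrow> cinner (G x) x \<in> \<real> \<and> 0 < Re (cinner (G x) x))"

definition positive_op :: "('a::complex_inner_space \<Rightarrow> 'a) \<Rightarrow> bool" where
  "positive_op T \<longleftrightarrow> bounded_selfadjoint T \<and> (\<forall>x. cinner (T x) x \<in> \<real> \<and> 0 \<le> Re (cinner (T x) x))"

definition is_sqrt_op :: "('a::complex_inner_space \<Rightarrow> 'a) \<Rightarrow> ('a \<Rightarrow> 'a) \<Rightarrow> bool" where
  "is_sqrt_op S G \<longleftrightarrow> positive_op S \<and> (\<forall>x. S (S x) = G x)"

definition RS_has_integral ::
    "(real \<Rightarrow> complex) \<Rightarrow> (real \<Rightarrow> complex) \<Rightarrow> real \<Rightarrow> real \<Rightarrow> complex \<Rightarrow> bool" where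
  "RS_has_integral f g a b I \<longleftrightarrow> a < b \<and>
     (\<forall>\<epsilon>>0. \<exists>\<delta>>0. \<forall>(n::nat) (t::nat \<Rightarrow> real) (s::nat \<Rightarrow> real).
        t 0 = a \<and> t n = b \<and>
        (\<forall>i<n. t i < t (Suc i) \<and> t (Suc i) - t i < \<delta> \<and> t i \<le> s i \<and> s i \<le> t (Suc i))
        \<longrightarrow> cmod ((\<Sum>i<n. f (s i) * (g (t (Suc i)) - g (t i))) - I) < \<epsilon>)"

definition RS_has_integral_R :: "(real \<Rightarrow> complex) \<Rightarrow> (real \<Rightarrow> complex) \<Rightarrow> complex \<Rightarrow> bool" where
  "RS_has_integral_R f g I \<longleftrightarrow>
     (\<forall>\<epsilon>>0. \<exists>M>0. \<forall>a b. a \<le> - M \<longrightarrow> M \<le> b \<longrightarrow>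
        (\<exists>J. RS_has_integral f g a b J \<and> cmod (J - I) < \<epsilon>))"

definition total_variation :: "(real \<Rightarrow> complex) \<Rightarrow> ereal" where
  "total_variation F = (SUP p \<in> {(n::nat, t::nat \<Rightarrow> real). \<forall>i<n. t i < t (Suc i)}.
      ereal (\<Sum>i<fst p. cmod (F (snd p (Suc i)) - F (snd p i))))"

definition bounded_variation :: "(real \<Rightarrow> complex) \<Rightarrow> bool" where
  "bounded_variation F \<longleftrightarrow> total_variation F < \<infinity>"

definition resolution_of_identity :: "(real \<Rightarrow> 'a::complex_inner_space \<Rightarrow> 'a) \<Rightarrow> bool" where
  "resolution_of_identity E \<longleftrightarrow>
     (\<forall>l. bounded_selfadjoint (E l) \<and> (\<forall>x. E l (E l x) = E l x))
     \<and> (\<forall>l m. l \<le> m \<longrightarrow> (\<forall>x. E l (E m x) = E l x))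
     \<and> (\<forall>x. ((\<lambda>l. E l x) \<longlongrightarrow> 0) at_bot)
     \<and> (\<forall>x. ((\<lambda>l. E l x) \<longlongrightarrow> x) at_top)
     \<and> (\<forall>x m. ((\<lambda>l. E l x) \<longlongrightarrow> E m x) (at_right m))"

text \<open>E is the spectral family of the self-adjoint operator T (domain D), i.e.
  T = \<integral> \<lambda> dE(\<lambda>): D = {x. \<integral> \<lambda>^2 d||E(\<lambda>)x||^2 < \<infinity>} and
  \<langle>Tx,y\<rangle> = \<integral> \<lambda> d\<langle>E(\<lambda>)x,y\<rangle> for x \<in> D.\<close>
definition spectral_family_of ::
    "(real \<Rightarrow> 'a::complex_inner_space \<Rightarrow> 'a) \<Rightarrow> 'a set \<Rightarrow> ('a \<Rightarrow> 'a) \<Rightarrow> bool" where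
  "spectral_family_of E D T \<longleftrightarrow> resolution_of_identity E
     \<and> (\<forall>x. x \<in> D \<longleftrightarrow> (\<exists>I. RS_has_integral_R (\<lambda>l. complex_of_real (l ^ 2))
                                 (\<lambda>l. complex_of_real ((norm (E l x)) ^ 2)) I))
     \<and> (\<forall>x\<in>D. \<forall>y. RS_has_integral_R (\<lambda>l. complex_of_real l) (\<lambda>l. cinner (E l x) y) (cinner (T x) y))"

text \<open>The pairing \<langle>X(\<lambda>)\<xi>,\<eta>\<rangle> := \<langle>E(\<lambda>)G^(1/2)\<xi>, G^(-1/2)\<eta>\<rangle>, for \<eta> \<in> D(G^(-1/2)) = range S,
  where S = G^(1/2) and G^(-1/2) = inv S on range S.\<close>
definition X_pair :: "(real \<Rightarrow> 'a::complex_inner_space \<Rightarrow> 'a) \<Rightarrow> ('a \<Rightarrow> 'a) \<Rightarrow> real \<Rightarrow> 'a \<Rightarrow> 'a \<Rightarrow> complex" where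
  "X_pair E S l \<xi> \<eta> = cinner (E l (S \<xi>)) (inv S \<eta>)"

end

theory Submission imports Defs begin

text \<open>All four statements are properties of the complex measures
  \<open>\<lambda> \<mapsto> \<langle>E(\<lambda>)x, y\<rangle>\<close> of an arbitrary resolution of the identity, read at
  \<open>x = G\<^sup>1\<^sup>/\<^sup>2\<xi>\<close>, \<open>y = G\<^sup>-\<^sup>1\<^sup>/\<^sup>2\<eta>\<close>. Limits and right continuity follow from the strong
  ones of \<open>E\<close>. For the variation, an increment over \<open>(s, t]\<close> is
  \<open>\<langle>(E t - E s)x, (E t - E s)y\<rangle>\<close>; Cauchy--Schwarz twice, together with
  orthogonality of the increments (so that \<open>\<Sum> \<parallel>(E t\<^sub>i\<^sub>+\<^sub>1 - E t\<^sub>i)x\<parallel>\<^sup>2 \<le> \<parallel>x\<parallel>\<^sup>2\<close>), bounds a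
  partition sum by \<open>\<parallel>x\<parallel> \<parallel>y\<parallel>\<close>. The integral formula is the spectral representation
  of \<open>H = G\<^sup>1\<^sup>/\<^sup>2AG\<^sup>-\<^sup>1\<^sup>/\<^sup>2\<close>, since \<open>\<langle>G\<^sup>1\<^sup>/\<^sup>2A\<xi>, G\<^sup>-\<^sup>1\<^sup>/\<^sup>2\<eta>\<rangle> = \<langle>A\<xi>, \<eta>\<rangle>\<close>.\<close>

context complex_inner_space begin

lemma cinner_zero_left [simp]: "cinner 0 y = 0"
  using cinner_add_left[of 0 0 y] by simp

lemma cinner_zero_right [simp]: "cinner x 0 = 0"
  by (metis cinner_commute cinner_zero_left complex_cnj_zero)

lemma cinner_diff_left: "cinner (x - y) z = cinner x z - cinner y z"
  using cinner_add_left[of "x - y" y z] by simp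

lemma cinner_diff_right: "cinner x (y - z) = cinner x y - cinner x z"
  by (metis cinner_commute cinner_diff_left complex_cnj_diff)

lemma cinner_scaleC_right: "cinner x (scaleC c y) = cnj c * cinner x y"
  by (metis cinner_commute cinner_scaleC_left complex_cnj_mult)

lemma cinner_self_eq_norm_power2: "cinner x x = complex_of_real ((norm x)\<^sup>2)"
proof -
  have "Im (cinner x x) = 0"
    using cinner_commute[of x x] by (metis Reals_cnj_iff complex_is_Real_iff)
  then show ?thesis
    using cinner_self_nonneg[of x] by (simp add: norm_eq_sqrt_cinner complex_eq_iff)
qed

lemma norm_cinner_le: "cmod (cinner x y) \<le> norm x * norm y"
proof (cases "y = 0")
  case False
  define a where "a = cinner x y"
  define b where "b = (norm y)\<^sup>2"
  have "b > 0" using False by (simp add: b_def)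
  have a_cnj: "a * cnj a = complex_of_real ((cmod a)\<^sup>2)"
    by (simp add: complex_norm_square[symmetric])
  \<comment> \<open>subtract from \<open>x\<close> its projection onto \<open>y\<close>\<close>
  define c where "c = a / complex_of_real b"
  have "cinner (x - scaleC c y) (x - scaleC c y)
      = cinner x x - cnj c * a - c * cnj a + c * cnj c * complex_of_real b"
    unfolding cinner_diff_left cinner_diff_right cinner_scaleC_left cinner_scaleC_right
    by (simp add: a_def b_def cinner_self_eq_norm_power2[of y] cinner_commute[of y x]
        algebra_simps)
  also have "\<dots> = complex_of_real ((norm x)\<^sup>2 - (cmod a)\<^sup>2 / b)"
    using \<open>b > 0\<close> a_cnj
    by (simp add: c_def cinner_self_eq_norm_power2 field_simps power2_eq_square mult.commute)
  finally have "(norm (x - scaleC c y))\<^sup>2 = (norm x)\<^sup>2 - (cmod a)\<^sup>2 / b"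
    unfolding cinner_self_eq_norm_power2 of_real_eq_iff .
  then have "(cmod a)\<^sup>2 \<le> (norm x * norm y)\<^sup>2"
    using \<open>b > 0\<close> zero_le_power2[of "norm (x - scaleC c y)"]
    by (simp add: b_def power_mult_distrib divide_le_eq mult.commute)
  then show ?thesis
    unfolding a_def by (meson mult_nonneg_nonneg norm_ge_zero power2_le_imp_le)
qed simp

lemma cinner_eqI: "(\<And>y. cinner u y = cinner v y) \<Longrightarrow> u = v"
  using cinner_self_eq_0[of "u - v"] by (simp add: cinner_diff_left)

end

lemma bounded_linear_cinner_left: "bounded_linear (\<lambda>x. cinner x y)"
proof (rule bounded_linear_intro)
  show "cinner (x + z) y = cinner x y + cinner z y" for x z
    by (rule cinner_add_left)
  show "cinner (scaleR r x) y = scaleR r (cinner x y)" for r x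
    by (simp add: scaleR_scaleC cinner_scaleC_left scaleR_conv_of_real)
  show "norm (cinner x y) \<le> norm x * norm y" for x
    by (rule norm_cinner_le)
qed

lemmas tendsto_cinner_left = bounded_linear.tendsto[OF bounded_linear_cinner_left]

lemma bounded_selfadjoint_diff:
  assumes "bounded_selfadjoint T" shows "T (x - y) = T x - T y"
proof -
  have "T (x - y + y) = T (x - y) + T y"
    using assms unfolding bounded_selfadjoint_def bounded_op_def lin_op_def by blast
  then show ?thesis by (simp add: algebra_simps)
qed

lemma bounded_selfadjoint_zero: "bounded_selfadjoint T \<Longrightarrow> T 0 = 0"
  using bounded_selfadjoint_diff[of T 0 0] by simp

lemma bounded_selfadjoint_cinner:
  "bounded_selfadjoint T \<Longrightarrow> cinner (T x) y = cinner x (T y)"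
  unfolding bounded_selfadjoint_def by blast

context
  fixes E :: "real \<Rightarrow> 'a::complex_inner_space \<Rightarrow> 'a"
  assumes E: "resolution_of_identity E"
begin

lemma resolution_cinner_commute: "cinner (E l x) y = cinner x (E l y)"
  using E unfolding resolution_of_identity_def bounded_selfadjoint_def by blast

lemma resolution_idem: "E l (E l x) = E l x"
  using E unfolding resolution_of_identity_def by blast

lemma resolution_mono_left: "l \<le> m \<Longrightarrow> E l (E m x) = E l x"
  using E unfolding resolution_of_identity_def by blast

lemma resolution_mono_right:
  assumes "l \<le> m" shows "E m (E l x) = E l x"
  by (rule cinner_eqI) (simp add: assms resolution_cinner_commute resolution_mono_left)

lemma resolution_cinner_increment:
  assumes "l \<le> m"
  shows "cinner (E m x) y - cinner (E l x) y = cinner (E m x - E l x) (E m y - E l y)"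
proof -
  have swap: "cinner (E a u) (E b v) = cinner (E b (E a u)) v" for a b u v
    by (simp add: resolution_cinner_commute)
  show ?thesis
    unfolding cinner_diff_left cinner_diff_right swap
    using assms by (simp add: resolution_idem resolution_mono_left resolution_mono_right)
qed

lemma resolution_norm_increment_power2:
  assumes "l \<le> m"
  shows "(norm (E m x - E l x))\<^sup>2 = (norm (E m x))\<^sup>2 - (norm (E l x))\<^sup>2"
proof -
  have norm_sq: "cinner (E k x) x = complex_of_real ((norm (E k x))\<^sup>2)" for k
    by (metis cinner_self_eq_norm_power2 resolution_cinner_commute resolution_idem)
  have "complex_of_real ((norm (E m x - E l x))\<^sup>2)
      = complex_of_real ((norm (E m x))\<^sup>2 - (norm (E l x))\<^sup>2)"
    using resolution_cinner_increment[OF assms, of x x]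
    unfolding norm_sq cinner_self_eq_norm_power2 of_real_diff by simp
  then show ?thesis
    unfolding of_real_eq_iff .
qed

lemma resolution_norm_le: "norm (E l x) \<le> norm x"
proof -
  have "(norm (E l x))\<^sup>2 = Re (cinner (E l x) x)"
    by (metis Re_complex_of_real cinner_self_eq_norm_power2 resolution_cinner_commute
        resolution_idem)
  also have "\<dots> \<le> norm (E l x) * norm x"
    using complex_Re_le_cmod norm_cinner_le order_trans by blast
  finally show ?thesis
    by (metis mult_le_cancel_left_pos norm_ge_zero power2_eq_square
        order.order_iff_strict mult_zero_left)
qed

lemma resolution_sum_increments_power2_le:
  assumes t: "\<forall>i<n. t i < t (Suc i)"
  shows "(\<Sum>i<n. (norm (E (t (Suc i)) x - E (t i) x))\<^sup>2) \<le> (norm x)\<^sup>2"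
proof -
  have "(\<Sum>i<n. (norm (E (t (Suc i)) x - E (t i) x))\<^sup>2)
      = (\<Sum>i<n. (norm (E (t (Suc i)) x))\<^sup>2 - (norm (E (t i) x))\<^sup>2)"
    using t by (intro sum.cong) (auto simp: resolution_norm_increment_power2)
  also have "\<dots> = (norm (E (t n) x))\<^sup>2 - (norm (E (t 0) x))\<^sup>2"
    by (rule sum_lessThan_telescope)
  also have "\<dots> \<le> (norm x)\<^sup>2"
    using power_mono[OF resolution_norm_le norm_ge_zero, of "t n" x 2]
      zero_le_power2[of "norm (E (t 0) x)"] by linarith
  finally show ?thesis .
qed

lemma resolution_cinner_variation_le:
  assumes t: "\<forall>i<n. t i < t (Suc i)"
  shows "(\<Sum>i<n. cmod (cinner (E (t (Suc i)) x) y - cinner (E (t i) x) y)) \<le> norm x * norm y"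
proof -
  define a where "a i = norm (E (t (Suc i)) x - E (t i) x)" for i
  define b where "b i = norm (E (t (Suc i)) y - E (t i) y)" for i
  have "(\<Sum>i<n. cmod (cinner (E (t (Suc i)) x) y - cinner (E (t i) x) y)) \<le> (\<Sum>i<n. a i * b i)"
    using t unfolding a_def b_def
    by (intro sum_mono) (simp add: resolution_cinner_increment less_imp_le norm_cinner_le)
  also have "\<dots> \<le> norm x * norm y"
  proof -
    have "(\<Sum>i<n. a i * b i)\<^sup>2 \<le> (\<Sum>i<n. (a i)\<^sup>2) * (\<Sum>i<n. (b i)\<^sup>2)"
      by (rule Cauchy_Schwarz_ineq_sum)
    also have "\<dots> \<le> (norm x)\<^sup>2 * (norm y)\<^sup>2"
      unfolding a_def b_def
      by (intro mult_mono resolution_sum_increments_power2_le[OF t]) (auto intro: sum_nonneg)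
    finally show ?thesis
      by (metis mult_nonneg_nonneg norm_ge_zero power2_le_imp_le power_mult_distrib)
  qed
  finally show ?thesis .
qed

lemma resolution_total_variation_le:
  "total_variation (\<lambda>l. cinner (E l x) y) \<le> ereal (norm x * norm y)"
  unfolding total_variation_def
  by (rule SUP_least) (auto simp: resolution_cinner_variation_le)

lemma resolution_bounded_variation: "bounded_variation (\<lambda>l. cinner (E l x) y)"
  unfolding bounded_variation_def
  by (rule order.strict_trans1[OF resolution_total_variation_le]) simp

lemma resolution_cinner_at_bot: "((\<lambda>l. cinner (E l x) y) \<longlongrightarrow> 0) at_bot"
  using E tendsto_cinner_left[of "\<lambda>l. E l x" 0 at_bot y]
  unfolding resolution_of_identity_def by simp

lemma resolution_cinner_at_top: "((\<lambda>l. cinner (E l x) y) \<longlongrightarrow> cinner x y) at_top"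
  using E tendsto_cinner_left[of "\<lambda>l. E l x" x at_top y]
  unfolding resolution_of_identity_def by simp

lemma resolution_cinner_at_right:
  "((\<lambda>l. cinner (E l x) y) \<longlongrightarrow> cinner (E \<mu> x) y) (at_right \<mu>)"
  using E tendsto_cinner_left[of "\<lambda>l. E l x" "E \<mu> x" "at_right \<mu>" y]
  unfolding resolution_of_identity_def by simp

end

lemma metric_op_sqrt_inj:
  assumes G: "bounded_metric_op G" and S: "is_sqrt_op S G"
  shows "inj S"
proof (rule injI)
  have S_bsa: "bounded_selfadjoint S"
    using S unfolding is_sqrt_op_def positive_op_def by blast
  fix x y assume "S x = S y"
  then have "G (x - y) = 0"
    using S bounded_selfadjoint_diff[OF S_bsa] bounded_selfadjoint_zero[OF S_bsa]
    unfolding is_sqrt_op_def by (metis right_minus_eq)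
  then have "x - y = 0"
    using G unfolding bounded_metric_op_def by (metis cinner_zero_left less_irrefl zero_complex.sel(1))
  then show "x = y" by simp
qed

lemma sqrt_op_cinner_inv:
  assumes S: "is_sqrt_op S G" and "\<eta> \<in> range S"
  shows "cinner (S u) (inv S \<eta>) = cinner u \<eta>"
  using assms bounded_selfadjoint_cinner[of S u "inv S \<eta>"] f_inv_into_f[of \<eta> S UNIV]
  unfolding is_sqrt_op_def positive_op_def by simp

theorem mainTheorem14:
  fixes A :: "'v::{complex_inner_space, complete_space} \<Rightarrow> 'v"
    and DA :: "'v set"
    and G S :: "'v \<Rightarrow> 'v"
    and E :: "real \<Rightarrow> 'v \<Rightarrow> 'v"
  assumes A_closed: "closed_op DA A"
    and A_dense: "densely_defined DA"
    and G_metric: "bounded_metric_op G"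
    and S_sqrt: "is_sqrt_op S G"
    and H_sa: "selfadjoint_op (S ` DA) (\<lambda>y. S (A (inv S y)))"
    and E_spec: "spectral_family_of E (S ` DA) (\<lambda>y. S (A (inv S y)))"
  shows
    "(\<forall>\<xi>. \<forall>\<eta>\<in>range S.
        ((\<lambda>l. X_pair E S l \<xi> \<eta>) \<longlongrightarrow> 0) at_bot
        \<and> ((\<lambda>l. X_pair E S l \<xi> \<eta>) \<longlongrightarrow> cinner \<xi> \<eta>) at_top)
     \<and> (\<forall>\<mu> \<xi>. \<forall>\<eta>\<in>range S.
        ((\<lambda>l. X_pair E S l \<xi> \<eta>) \<longlongrightarrow> X_pair E S \<mu> \<xi> \<eta>) (at_right \<mu>))
     \<and> (\<forall>\<xi>. \<forall>\<eta>\<in>range S.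
        bounded_variation (\<lambda>l. X_pair E S l \<xi> \<eta>)
        \<and> total_variation (\<lambda>l. X_pair E S l \<xi> \<eta>) \<le> ereal (norm (S \<xi>) * norm (inv S \<eta>)))
     \<and> (\<forall>\<xi>\<in>DA. \<forall>\<eta>\<in>range S.
        RS_has_integral_R (\<lambda>l. complex_of_real l) (\<lambda>l. X_pair E S l \<xi> \<eta>) (cinner (A \<xi>) \<eta>))"
proof -
  have E: "resolution_of_identity E"
    using E_spec unfolding spectral_family_of_def by blast
  have integral: "RS_has_integral_R (\<lambda>l. complex_of_real l) (\<lambda>l. X_pair E S l \<xi> \<eta>) (cinner (A \<xi>) \<eta>)"
    if "\<xi> \<in> DA" "\<eta> \<in> range S" for \<xi> \<eta>
  proof -
    have "RS_has_integral_R (\<lambda>l. complex_of_real l) (\<lambda>l. cinner (E l (S \<xi>)) (inv S \<eta>))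
        (cinner (S (A (inv S (S \<xi>)))) (inv S \<eta>))"
      using E_spec \<open>\<xi> \<in> DA\<close> unfolding spectral_family_of_def by blast
    then show ?thesis
      unfolding X_pair_def inv_f_f[OF metric_op_sqrt_inj[OF G_metric S_sqrt]]
        sqrt_op_cinner_inv[OF S_sqrt \<open>\<eta> \<in> range S\<close>] .
  qed
  have at_top: "((\<lambda>l. X_pair E S l \<xi> \<eta>) \<longlongrightarrow> cinner \<xi> \<eta>) at_top"
    if "\<eta> \<in> range S" for \<xi> \<eta>
    using resolution_cinner_at_top[OF E, of "S \<xi>" "inv S \<eta>"]
    unfolding X_pair_def sqrt_op_cinner_inv[OF S_sqrt that] .
  show ?thesis
    using resolution_cinner_at_bot[OF E] resolution_cinner_at_right[OF E]
      resolution_bounded_variation[OF E] resolution_total_variation_le[OF E]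
    unfolding X_pair_def using at_top integral unfolding X_pair_def by blast
qed

end
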